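(* Consider the optimisation problem of choosing a set of bins $\{\Delta_b\}_{b=1}^{B}$ (disjoint intervals whose union is $[0,1]$, with $B$ arbitrary) that minimises $\sum_{b=1}^{B} \frac{N_b}{N}\,\mathrm{D}(\mathcal{D}_b^y,\widehat{P}_b)$ subject to $\widehat{P}_1 \le \dots \le \widehat{P}_B$, where $\mathrm{D}(\mathcal{D}_b^y,\widehat{P}_b) = \frac{1}{N_b}\sum_{y_i\in\mathcal{D}_b^y}(y_i-\widehat{P}_b)^2$ is the within-bin variance. The minimum of this problem is attained at the bins computed as follows: sort the labels $\{y_i\}_{i=1}^N$ in ascending order of the model predictions $\{P_\theta(x_i)\}_{i=1}^N$; apply the pool-adjacent-violators algorithm (PAVA), i.e. monotonic regression under the squared error $\sum_{i=1}^N(\widehat{y}_i-y_i)^2$, to obtain a monotonically increasing fitted sequence $\{\widehat{y}_i\}_{i=1}^N$; and place a bin boundary at $(P_\theta(x_{i-1})+P_\theta(x_i))/2$ for every $i$ with $\widehat{y}_{i-1}\ne\widehat{y}_i$ (the first bin starting at $0$ and the last bin ending at $1$).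
   Context: Binary classification with data $\mathcal{D}=\{(x_i,y_i)\}_{i=1}^N$, $y_i\in\{0,1\}$, and a probabilistic classifier $P_\theta:\mathcal{X}\to[0,1]$. For a set of bins $\{\Delta_b\}_{b=1}^B$, the data subsets are $\mathcal{D}_b=\{(x_i,y_i)\in\mathcal{D}\mid P_\theta(x_i)\in\Delta_b\}$, with label set $\mathcal{D}_b^y$, size $N_b$, and empirical probability $\widehat{P}_b=\frac{1}{N_b}\sum_{y_i\in\mathcal{D}_b^y}y_i$. It is assumed that the solution of the optimisation problem is not the trivial single bin $\{[0,1]\}$. *)

theory Defs
  imports "HOL-Analysis.Analysis"
begin

text \<open>Data: indices 0..N-1, predictions p i, labels y i.
  A binning is a list of sets (bins) Delta_1 ... Delta_B.\<close>

definition bin_idx :: "nat \<Rightarrow> (nat \<Rightarrow> real) \<Rightarrow> real set \<Rightarrow> nat set" where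
  "bin_idx N p \<Delta> = {i. i < N \<and> p i \<in> \<Delta>}"

definition bin_count :: "nat \<Rightarrow> (nat \<Rightarrow> real) \<Rightarrow> real set \<Rightarrow> nat" where
  "bin_count N p \<Delta> = card (bin_idx N p \<Delta>)"

definition bin_prob :: "nat \<Rightarrow> (nat \<Rightarrow> real) \<Rightarrow> (nat \<Rightarrow> real) \<Rightarrow> real set \<Rightarrow> real" where
  "bin_prob N p y \<Delta> = (\<Sum>i\<in>bin_idx N p \<Delta>. y i) / real (bin_count N p \<Delta>)"

definition bin_var :: "nat \<Rightarrow> (nat \<Rightarrow> real) \<Rightarrow> (nat \<Rightarrow> real) \<Rightarrow> real set \<Rightarrow> real" where
  "bin_var N p y \<Delta> =
     (\<Sum>i\<in>bin_idx N p \<Delta>. (y i - bin_prob N p y \<Delta>)^2) / real (bin_count N p \<Delta>)"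

definition binning_objective ::
  "nat \<Rightarrow> (nat \<Rightarrow> real) \<Rightarrow> (nat \<Rightarrow> real) \<Rightarrow> real set list \<Rightarrow> real" where
  "binning_objective N p y Bs =
     (\<Sum>b<length Bs. real (bin_count N p (Bs!b)) / real N * bin_var N p y (Bs!b))"

definition valid_binning :: "real set list \<Rightarrow> bool" where
  "valid_binning Bs \<longleftrightarrow>
     Bs \<noteq> [] \<and>
     (\<forall>b<length Bs. is_interval (Bs!b)) \<and>
     (\<forall>b<length Bs. \<forall>b'<length Bs. b \<noteq> b' \<longrightarrow> Bs!b \<inter> Bs!b' = {}) \<and>
     (\<Union>b<length Bs. Bs!b) = {0..1} \<and>
     (\<forall>b b'. b < b' \<and> b' < length Bs \<longrightarrow> (\<forall>x\<in>Bs!b. \<forall>x'\<in>Bs!b'. x < x'))"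

text \<open>Monotonicity constraint P_1 \<le> ... \<le> P_B (imposed on bins containing data;
  the empirical probability of an empty bin is undefined).\<close>
definition monotone_bins ::
  "nat \<Rightarrow> (nat \<Rightarrow> real) \<Rightarrow> (nat \<Rightarrow> real) \<Rightarrow> real set list \<Rightarrow> bool" where
  "monotone_bins N p y Bs \<longleftrightarrow>
     (\<forall>b b'. b < b' \<and> b' < length Bs \<and> bin_count N p (Bs!b) > 0 \<and> bin_count N p (Bs!b') > 0
        \<longrightarrow> bin_prob N p y (Bs!b) \<le> bin_prob N p y (Bs!b'))"

definition feasible_binning ::
  "nat \<Rightarrow> (nat \<Rightarrow> real) \<Rightarrow> (nat \<Rightarrow> real) \<Rightarrow> real set list \<Rightarrow> bool" where
  "feasible_binning N p y Bs \<longleftrightarrow> valid_binning Bs \<and> monotone_bins N p y Bs"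

text \<open>Monotonic (isotonic) regression under squared error: yhat is nondecreasing on 0..N-1
  and minimises the squared error to v among all nondecreasing sequences
  (this is what PAVA computes).\<close>
definition nondecr_on :: "nat \<Rightarrow> (nat \<Rightarrow> real) \<Rightarrow> bool" where
  "nondecr_on N z \<longleftrightarrow> (\<forall>i j. i \<le> j \<and> j < N \<longrightarrow> z i \<le> z j)"

definition isotonic_fit :: "nat \<Rightarrow> (nat \<Rightarrow> real) \<Rightarrow> (nat \<Rightarrow> real) \<Rightarrow> bool" where
  "isotonic_fit N v yhat \<longleftrightarrow> nondecr_on N yhat \<and>
     (\<forall>z. nondecr_on N z \<longrightarrow> (\<Sum>k<N. (yhat k - v k)^2) \<le> (\<Sum>k<N. (z k - v k)^2))"

text \<open>Bins computed from the fit: q k is the k-th smallest prediction; a boundary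
  (q(k-1)+q k)/2 is placed wherever yhat(k-1) \<noteq> yhat k; first bin starts at 0, last ends at 1.\<close>
definition pava_thresholds :: "nat \<Rightarrow> (nat \<Rightarrow> real) \<Rightarrow> (nat \<Rightarrow> real) \<Rightarrow> real list" where
  "pava_thresholds N q yhat =
     sorted_list_of_set ((\<lambda>k. (q (k - 1) + q k) / 2) ` {k. 0 < k \<and> k < N \<and> yhat (k - 1) \<noteq> yhat k})"

definition bins_of_thresholds :: "real list \<Rightarrow> real set list" where
  "bins_of_thresholds ts =
     map (\<lambda>j. let lo = (if j = 0 then 0 else ts!(j - 1)) in
               if j = length ts then {lo..1} else {lo..<ts!j}) [0..<Suc (length ts)]"

definition pava_bins :: "nat \<Rightarrow> (nat \<Rightarrow> real) \<Rightarrow> (nat \<Rightarrow> real) \<Rightarrow> real set list" where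
  "pava_bins N q yhat = bins_of_thresholds (pava_thresholds N q yhat)"

end

theory Submission
  imports Defs
begin

text \<open>For any feasible binning, give each sorted data point the empirical probability of
  its bin. The monotonicity constraint makes this a nondecreasing sequence, and the objective
  is its mean squared error to the labels, so the isotonic fit bounds the objective from below.
  The PAVA bins are exactly the level sets of the isotonic fit, and on each level set the fit
  equals the mean of the labels there; hence the empirical probabilities of the PAVA bins
  reproduce the fit and the bound is attained.\<close>

section \<open>Level sets of an isotonic fit\<close>

lemma linear_coeff_eq_0_if_local_min:
  fixes a b \<delta> :: real
  assumes "\<delta> > 0" and min: "\<And>\<epsilon>. \<bar>\<epsilon>\<bar> < \<delta> \<Longrightarrow> 0 \<le> a * \<epsilon> + b * \<epsilon>\<^sup>2"
  shows "a = 0"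
proof (rule ccontr)
  assume "a \<noteq> 0"
  define \<eta> where "\<eta> = min (\<delta> / (2 * \<bar>a\<bar>)) (1 / (\<bar>b\<bar> + 1))"
  have "\<eta> > 0" using \<open>a \<noteq> 0\<close> \<open>\<delta> > 0\<close> by (simp add: \<eta>_def)
  have "\<bar>a\<bar> * \<eta> < \<delta>"
  proof -
    have "\<bar>a\<bar> * \<eta> \<le> \<bar>a\<bar> * (\<delta> / (2 * \<bar>a\<bar>))"
      by (intro mult_left_mono) (auto simp: \<eta>_def)
    also have "\<dots> = \<delta> / 2" using \<open>a \<noteq> 0\<close> by simp
    finally show ?thesis using \<open>\<delta> > 0\<close> by simp
  qed
  have "b * \<eta> < 1"
  proof -
    have "b * \<eta> \<le> \<bar>b\<bar> * (1 / (\<bar>b\<bar> + 1))"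
      using \<open>\<eta> > 0\<close> by (intro order.trans[OF mult_right_mono[of b "\<bar>b\<bar>"]] mult_left_mono)
        (auto simp: \<eta>_def)
    also have "\<dots> < 1" by (simp add: field_simps)
    finally show ?thesis .
  qed
  have "0 \<le> a * (- a * \<eta>) + b * (- a * \<eta>)\<^sup>2"
    using min[of "- a * \<eta>"] \<open>\<bar>a\<bar> * \<eta> < \<delta>\<close> \<open>\<eta> > 0\<close> by (simp add: abs_mult)
  also have "\<dots> = a\<^sup>2 * \<eta> * (b * \<eta> - 1)" by (simp add: power2_eq_square algebra_simps)
  also have "\<dots> < 0"
    using \<open>a \<noteq> 0\<close> \<open>\<eta> > 0\<close> \<open>b * \<eta> < 1\<close> by (simp add: mult_pos_neg)
  finally show False by simp
qed

lemma nondecr_on_shift_level: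
  assumes mono: "nondecr_on N f"
    and gap: "\<And>k. k < N \<Longrightarrow> f k \<noteq> c \<Longrightarrow> \<delta> \<le> \<bar>f k - c\<bar>" and "\<bar>\<epsilon>\<bar> < \<delta>"
  shows "nondecr_on N (\<lambda>k. f k + (if f k = c then \<epsilon> else 0))"
  unfolding nondecr_on_def
proof (intro allI impI)
  fix i j assume ij: "i \<le> j \<and> j < N"
  then have "f i \<le> f j" using mono unfolding nondecr_on_def by blast
  then show "f i + (if f i = c then \<epsilon> else 0) \<le> f j + (if f j = c then \<epsilon> else 0)"
    using gap[of i] gap[of j] ij \<open>\<bar>\<epsilon>\<bar> < \<delta>\<close> by (auto split: if_splits)
qed

lemma sum_sq_shift_level:
  fixes f v :: "nat \<Rightarrow> real" and N :: nat and c \<epsilon> :: real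
  defines "L \<equiv> {k. k < N \<and> f k = c}"
  shows "(\<Sum>k<N. (f k + (if f k = c then \<epsilon> else 0) - v k)\<^sup>2)
    = (\<Sum>k<N. (f k - v k)\<^sup>2) + 2 * (\<Sum>k\<in>L. c - v k) * \<epsilon> + real (card L) * \<epsilon>\<^sup>2"
proof -
  have "(f k + (if f k = c then \<epsilon> else 0) - v k)\<^sup>2
      = (f k - v k)\<^sup>2 + (if f k = c then 2 * (c - v k) * \<epsilon> + \<epsilon>\<^sup>2 else 0)" for k
    by (auto simp: power2_eq_square algebra_simps)
  then have "(\<Sum>k<N. (f k + (if f k = c then \<epsilon> else 0) - v k)\<^sup>2)
      = (\<Sum>k<N. (f k - v k)\<^sup>2) + (\<Sum>k\<in>L. 2 * (c - v k) * \<epsilon> + \<epsilon>\<^sup>2)"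
    by (simp add: sum.distrib sum.inter_filter[symmetric] L_def lessThan_def)
  also have "(\<Sum>k\<in>L. 2 * (c - v k) * \<epsilon> + \<epsilon>\<^sup>2) = 2 * (\<Sum>k\<in>L. c - v k) * \<epsilon> + real (card L) * \<epsilon>\<^sup>2"
    by (simp add: sum.distrib sum_distrib_left sum_distrib_right)
  finally show ?thesis by simp
qed

text \<open>Shifting a whole level set by a small \<open>\<epsilon>\<close> keeps the fit nondecreasing, so
  optimality forces the first-order term of the squared error in \<open>\<epsilon>\<close> to vanish.\<close>
lemma isotonic_fit_level_mean:
  fixes N k0 :: nat
  assumes fit: "isotonic_fit N v yhat" and "k0 < N"
  defines "L \<equiv> {j. j < N \<and> yhat j = yhat k0}"
  shows "(\<Sum>k\<in>L. v k) = real (card L) * yhat k0"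
proof -
  define c where "c = yhat k0"
  obtain \<delta> where "\<delta> > 0" and "\<forall>x\<in>yhat ` {..<N}. x \<noteq> c \<longrightarrow> \<delta> \<le> dist c x"
    using finite_set_avoid[of "yhat ` {..<N}" c] by blast
  then have gap: "\<And>k. k < N \<Longrightarrow> yhat k \<noteq> c \<Longrightarrow> \<delta> \<le> \<bar>yhat k - c\<bar>"
    by (simp add: dist_real_def abs_minus_commute)
  have "0 \<le> 2 * (\<Sum>k\<in>L. c - v k) * \<epsilon> + real (card L) * \<epsilon>\<^sup>2" if "\<bar>\<epsilon>\<bar> < \<delta>" for \<epsilon>
  proof -
    have "nondecr_on N (\<lambda>k. yhat k + (if yhat k = c then \<epsilon> else 0))"
      using fit gap that
      by (intro nondecr_on_shift_level[where \<delta> = \<delta>]) (auto simp: isotonic_fit_def)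
    then have "(\<Sum>k<N. (yhat k - v k)\<^sup>2) \<le> (\<Sum>k<N. (yhat k + (if yhat k = c then \<epsilon> else 0) - v k)\<^sup>2)"
      using fit unfolding isotonic_fit_def by blast
    then show ?thesis unfolding sum_sq_shift_level L_def c_def by simp
  qed
  then have "2 * (\<Sum>k\<in>L. c - v k) = 0"
    using \<open>\<delta> > 0\<close> by (intro linear_coeff_eq_0_if_local_min) auto
  then show ?thesis by (simp add: sum_subtractf L_def c_def)
qed

section \<open>Bins of a valid binning\<close>

definition bin_index :: "real set list \<Rightarrow> real \<Rightarrow> nat" where
  "bin_index Bs x = (THE b. b < length Bs \<and> x \<in> Bs ! b)"

lemma bin_index_eqI:
  assumes "valid_binning Bs" and "b < length Bs" and "x \<in> Bs ! b"
  shows "bin_index Bs x = b"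
  unfolding bin_index_def
proof (rule the_equality)
  fix b' assume "b' < length Bs \<and> x \<in> Bs ! b'"
  then show "b' = b" using assms unfolding valid_binning_def by blast
qed (use assms in simp)

lemma bin_index:
  assumes "valid_binning Bs" and "x \<in> {0..1}"
  shows "bin_index Bs x < length Bs" and "x \<in> Bs ! bin_index Bs x"
proof -
  obtain b where "b < length Bs" and "x \<in> Bs ! b"
    using assms unfolding valid_binning_def by (metis UN_E lessThan_iff)
  then show "bin_index Bs x < length Bs" and "x \<in> Bs ! bin_index Bs x"
    using bin_index_eqI[OF assms(1)] by simp_all
qed

lemma bin_index_mono:
  assumes vb: "valid_binning Bs" and "x \<in> {0..1}" "x' \<in> {0..1}" and "x \<le> x'"
  shows "bin_index Bs x \<le> bin_index Bs x'"
proof (rule ccontr)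
  assume "\<not> ?thesis"
  then have "x' < x"
    using vb bin_index[OF vb \<open>x \<in> {0..1}\<close>] bin_index[OF vb \<open>x' \<in> {0..1}\<close>]
    unfolding valid_binning_def by (meson not_le)
  then show False using \<open>x \<le> x'\<close> by simp
qed

lemma bin_idx_eq_bin_index:
  assumes "valid_binning Bs" and "\<forall>i<N. p i \<in> {0..1}" and "b < length Bs"
  shows "bin_idx N p (Bs ! b) = {i. i < N \<and> bin_index Bs (p i) = b}"
  using assms bin_index(2) bin_index_eqI unfolding bin_idx_def by blast

lemma bin_count_bin_index_pos:
  assumes "valid_binning Bs" and "\<forall>i<N. p i \<in> {0..1}" and "i < N"
  shows "bin_count N p (Bs ! bin_index Bs (p i)) > 0"
proof -
  have "i \<in> bin_idx N p (Bs ! bin_index Bs (p i))"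
    using assms bin_index(2) unfolding bin_idx_def by blast
  then show ?thesis unfolding bin_count_def bin_idx_def by (auto simp: card_gt_0_iff)
qed

lemma binning_objective_eq_mean_sq:
  assumes vb: "valid_binning Bs" and p_range: "\<forall>i<N. p i \<in> {0..1}"
  shows "binning_objective N p y Bs
    = (\<Sum>i<N. (bin_prob N p y (Bs ! bin_index Bs (p i)) - y i)\<^sup>2) / real N"
proof -
  let ?P = "\<lambda>i. bin_prob N p y (Bs ! bin_index Bs (p i))"
  have "real (bin_count N p (Bs ! b)) / real N * bin_var N p y (Bs ! b)
      = (\<Sum>i\<in>{i. i < N \<and> bin_index Bs (p i) = b}. (?P i - y i)\<^sup>2) / real N"
    if "b < length Bs" for b
  proof -
    have idx: "bin_idx N p (Bs ! b) = {i. i < N \<and> bin_index Bs (p i) = b}"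
      using bin_idx_eq_bin_index[OF vb p_range that] .
    have "(\<Sum>i\<in>{i. i < N \<and> bin_index Bs (p i) = b}. (?P i - y i)\<^sup>2)
        = (\<Sum>i\<in>bin_idx N p (Bs ! b). (y i - bin_prob N p y (Bs ! b))\<^sup>2)"
      unfolding idx by (auto intro: sum.cong simp: power2_commute)
    moreover have "finite (bin_idx N p (Bs ! b))" by (simp add: idx)
    ultimately show ?thesis
      by (cases "bin_idx N p (Bs ! b) = {}") (simp_all add: bin_var_def bin_count_def)
  qed
  then have "binning_objective N p y Bs
      = (\<Sum>b<length Bs. \<Sum>i\<in>{i \<in> {..<N}. bin_index Bs (p i) = b}. (?P i - y i)\<^sup>2) / real N"
    unfolding binning_objective_def by (simp add: sum_divide_distrib)
  also have "\<dots> = (\<Sum>i<N. (?P i - y i)\<^sup>2) / real N"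
    using bin_index(1)[OF vb] p_range by (subst sum.group) auto
  finally show ?thesis .
qed

lemma binning_objective_eq_sorted_mean_sq:
  assumes "valid_binning Bs" and "\<forall>i<N. p i \<in> {0..1}" and "bij_betw \<sigma> {..<N} {..<N}"
  shows "binning_objective N p y Bs
    = (\<Sum>k<N. (bin_prob N p y (Bs ! bin_index Bs (p (\<sigma> k))) - y (\<sigma> k))\<^sup>2) / real N"
  unfolding binning_objective_eq_mean_sq[OF assms(1,2)]
  using sum.reindex_bij_betw[OF assms(3), of "\<lambda>i. (bin_prob N p y (Bs ! bin_index Bs (p i)) - y i)\<^sup>2"]
  by simp

lemma monotone_bins_iff_nondecr_on:
  assumes vb: "valid_binning Bs" and p_range: "\<forall>i<N. p i \<in> {0..1}"
    and perm: "bij_betw \<sigma> {..<N} {..<N}" and sorted: "nondecr_on N (\<lambda>k. p (\<sigma> k))"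
  shows "monotone_bins N p y Bs
    \<longleftrightarrow> nondecr_on N (\<lambda>k. bin_prob N p y (Bs ! bin_index Bs (p (\<sigma> k))))"
proof -
  let ?b = "\<lambda>k. bin_index Bs (p (\<sigma> k))"
  have \<sigma>: "\<sigma> k < N" if "k < N" for k using perm that by (auto dest: bij_betw_apply)
  have b_mono: "?b k \<le> ?b k'" if "k \<le> k'" "k' < N" for k k'
    using that sorted p_range \<sigma>
    by (intro bin_index_mono[OF vb]) (auto simp: nondecr_on_def)
  have b_len: "?b k < length Bs" if "k < N" for k
    using bin_index(1)[OF vb] p_range \<sigma> that by blast
  have b_count: "bin_count N p (Bs ! ?b k) > 0" if "k < N" for k
    using bin_count_bin_index_pos[OF vb p_range \<sigma>[OF that]] .
  have b_surj: "\<exists>k<N. ?b k = b" if b: "b < length Bs" "bin_count N p (Bs ! b) > 0" for b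
  proof -
    obtain i where "i < N" "bin_index Bs (p i) = b"
      using b(2) unfolding bin_count_def bin_idx_eq_bin_index[OF vb p_range b(1)]
      by (metis (mono_tags, lifting) Collect_empty_eq card.empty less_irrefl)
    moreover obtain k where "k < N" "i = \<sigma> k"
      using perm \<open>i < N\<close> by (metis bij_betw_imp_surj_on imageE lessThan_iff)
    ultimately show ?thesis by blast
  qed
  show ?thesis
  proof
    assume mono: "monotone_bins N p y Bs"
    show "nondecr_on N (\<lambda>k. bin_prob N p y (Bs ! ?b k))"
      unfolding nondecr_on_def
    proof (intro allI impI)
      fix k k' assume "k \<le> k' \<and> k' < N"
      then show "bin_prob N p y (Bs ! ?b k) \<le> bin_prob N p y (Bs ! ?b k')"
        using mono b_mono[of k k'] b_len[of k'] b_count[of k] b_count[of k']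
        unfolding monotone_bins_def by (cases "?b k = ?b k'") auto
    qed
  next
    assume nd: "nondecr_on N (\<lambda>k. bin_prob N p y (Bs ! ?b k))"
    show "monotone_bins N p y Bs"
      unfolding monotone_bins_def
    proof (intro allI impI)
      fix b b'
      assume bb': "b < b' \<and> b' < length Bs \<and> 0 < bin_count N p (Bs ! b) \<and> 0 < bin_count N p (Bs ! b')"
      then obtain k k' where "k < N" "?b k = b" "k' < N" "?b k' = b'"
        using b_surj[of b] b_surj[of b'] bb' by auto
      moreover from this have "k \<le> k'" using b_mono[of k' k] bb' by fastforce
      ultimately show "bin_prob N p y (Bs ! b) \<le> bin_prob N p y (Bs ! b')"
        using nd unfolding nondecr_on_def by blast
    qed
  qed
qed

lemma isotonic_fit_le_binning_objective:
  assumes "feasible_binning N p y Bs" and p_range: "\<forall>i<N. p i \<in> {0..1}"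
    and perm: "bij_betw \<sigma> {..<N} {..<N}" and sorted: "nondecr_on N (\<lambda>k. p (\<sigma> k))"
    and fit: "isotonic_fit N (\<lambda>k. y (\<sigma> k)) yhat"
  shows "(\<Sum>k<N. (yhat k - y (\<sigma> k))\<^sup>2) / real N \<le> binning_objective N p y Bs"
proof -
  have vb: "valid_binning Bs" and "monotone_bins N p y Bs"
    using assms(1) unfolding feasible_binning_def by auto
  then have "nondecr_on N (\<lambda>k. bin_prob N p y (Bs ! bin_index Bs (p (\<sigma> k))))"
    using monotone_bins_iff_nondecr_on[OF vb p_range perm sorted] by blast
  then have "(\<Sum>k<N. (yhat k - y (\<sigma> k))\<^sup>2)
      \<le> (\<Sum>k<N. (bin_prob N p y (Bs ! bin_index Bs (p (\<sigma> k))) - y (\<sigma> k))\<^sup>2)"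
    using fit unfolding isotonic_fit_def by blast
  then show ?thesis
    unfolding binning_objective_eq_sorted_mean_sq[OF vb p_range perm] by (simp add: divide_right_mono)
qed

lemma bin_prob_eq_isotonic_fit:
  assumes vb: "valid_binning Bs" and p_range: "\<forall>i<N. p i \<in> {0..1}"
    and perm: "bij_betw \<sigma> {..<N} {..<N}" and fit: "isotonic_fit N (\<lambda>k. y (\<sigma> k)) yhat"
    and levels: "\<And>k k'. k < N \<Longrightarrow> k' < N \<Longrightarrow>
      bin_index Bs (p (\<sigma> k)) = bin_index Bs (p (\<sigma> k')) \<longleftrightarrow> yhat k = yhat k'"
    and "k < N"
  shows "bin_prob N p y (Bs ! bin_index Bs (p (\<sigma> k))) = yhat k"
proof -
  define L where "L = {k'. k' < N \<and> yhat k' = yhat k}"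
  have "inj_on \<sigma> L"
    using perm unfolding L_def bij_betw_def by (auto intro: inj_on_subset)
  have \<sigma>_onto: "\<sigma> ` {..<N} = {..<N}" using perm by (simp add: bij_betw_def)
  then have "bin_index Bs (p (\<sigma> k)) < length Bs"
    using bin_index(1)[OF vb] p_range \<open>k < N\<close> by blast
  then have "bin_idx N p (Bs ! bin_index Bs (p (\<sigma> k)))
      = {i. i < N \<and> bin_index Bs (p i) = bin_index Bs (p (\<sigma> k))}"
    by (rule bin_idx_eq_bin_index[OF vb p_range])
  also have "\<dots> = \<sigma> ` L"
  proof (intro equalityI subsetI)
    fix i assume i: "i \<in> {i. i < N \<and> bin_index Bs (p i) = bin_index Bs (p (\<sigma> k))}"
    then have "i \<in> \<sigma> ` {..<N}" using \<sigma>_onto by simp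
    then obtain k' where "k' < N" "i = \<sigma> k'" by blast
    then show "i \<in> \<sigma> ` L" using i levels[of k' k] \<open>k < N\<close> unfolding L_def by auto
  next
    fix i assume "i \<in> \<sigma> ` L"
    then obtain k' where "k' < N" "yhat k' = yhat k" "i = \<sigma> k'" unfolding L_def by auto
    then show "i \<in> {i. i < N \<and> bin_index Bs (p i) = bin_index Bs (p (\<sigma> k))}"
      using levels[of k' k] \<open>k < N\<close> \<sigma>_onto by auto
  qed
  finally have idx: "bin_idx N p (Bs ! bin_index Bs (p (\<sigma> k))) = \<sigma> ` L" .
  have "(\<Sum>i\<in>\<sigma> ` L. y i) = (\<Sum>k'\<in>L. y (\<sigma> k'))"
    by (simp add: sum.reindex[OF \<open>inj_on \<sigma> L\<close>])
  also have "\<dots> = real (card L) * yhat k"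
    using isotonic_fit_level_mean[OF fit \<open>k < N\<close>] unfolding L_def .
  finally have "(\<Sum>i\<in>\<sigma> ` L. y i) = real (card L) * yhat k" .
  moreover have "card L > 0" using \<open>k < N\<close> unfolding L_def by (auto simp: card_gt_0_iff)
  ultimately show ?thesis
    unfolding bin_prob_def bin_count_def idx card_image[OF \<open>inj_on \<sigma> L\<close>] by simp
qed

section \<open>Bins cut at thresholds\<close>

lemma length_bins_of_thresholds [simp]: "length (bins_of_thresholds ts) = Suc (length ts)"
  by (simp add: bins_of_thresholds_def)

lemma mem_bins_of_thresholds_iff:
  assumes "j \<le> length ts"
  shows "x \<in> bins_of_thresholds ts ! j
    \<longleftrightarrow> (if j = 0 then 0 else ts ! (j - 1)) \<le> x \<and> (if j = length ts then x \<le> 1 else x < ts ! j)"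
  using assms by (simp add: bins_of_thresholds_def Let_def nth_append del: upt_Suc)

lemma bins_of_thresholds_ordered:
  assumes "sorted_wrt (<) ts" and "b < b'" "b' \<le> length ts"
    and "x \<in> bins_of_thresholds ts ! b" "x' \<in> bins_of_thresholds ts ! b'"
  shows "x < x'"
proof -
  have "x < ts ! b" "ts ! (b' - 1) \<le> x'"
    using assms(2-) by (auto simp: mem_bins_of_thresholds_iff)
  moreover have "ts ! b \<le> ts ! (b' - 1)"
    using assms(2,3) sorted_nth_mono[OF strict_sorted_imp_sorted[OF assms(1)]] by simp
  ultimately show ?thesis by simp
qed

lemma valid_binning_bins_of_thresholds:
  assumes sorted: "sorted_wrt (<) ts" and ts01: "set ts \<subseteq> {0<..<1}"
  shows "valid_binning (bins_of_thresholds ts)"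
proof -
  let ?B = "bins_of_thresholds ts"
  have ordered: "\<forall>b b'. b < b' \<and> b' < length ?B \<longrightarrow> (\<forall>x\<in>?B ! b. \<forall>x'\<in>?B ! b'. x < x')"
    using bins_of_thresholds_ordered[OF sorted] by auto
  have "?B ! b \<inter> ?B ! b' = {}" if "b < length ?B" "b' < length ?B" "b \<noteq> b'" for b b'
    using ordered that by (metis disjoint_iff less_irrefl linorder_neqE_nat)
  moreover have "is_interval (?B ! b)" if "b < length ?B" for b
    using that by (simp add: bins_of_thresholds_def Let_def nth_append is_interval_convex_1 del: upt_Suc)
  moreover have "(\<Union>b<length ?B. ?B ! b) = {0..1}"
  proof (intro equalityI subsetI)
    fix x assume "x \<in> (\<Union>b<length ?B. ?B ! b)"
    then obtain j where "j \<le> length ts" "x \<in> ?B ! j"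
      by (metis UN_E lessThan_iff length_bins_of_thresholds less_Suc_eq_le)
    moreover have ts_in: "ts ! i \<in> {0<..<1}" if "i < length ts" for i
      using ts01 nth_mem that by blast
    ultimately have "(if j = 0 then 0 else ts ! (j - 1)) \<le> x" "if j = length ts then x \<le> 1 else x < ts ! j"
      by (simp_all add: mem_bins_of_thresholds_iff)
    moreover have "0 \<le> (if j = 0 then 0 else ts ! (j - 1))"
      using ts_in[of "j - 1"] \<open>j \<le> length ts\<close> by (simp add: less_imp_le)
    ultimately show "x \<in> {0..1}"
      using ts_in[of j] \<open>j \<le> length ts\<close> by (auto split: if_splits)
  next
    fix x :: real assume x: "x \<in> {0..1}"
    define j where "j = (LEAST j. j = length ts \<or> x < ts ! j)"
    have "j \<le> length ts" unfolding j_def by (rule Least_le) simp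
    moreover have "j = length ts \<or> x < ts ! j" unfolding j_def by (rule LeastI[of _ "length ts"]) simp
    moreover have "ts ! (j - 1) \<le> x" if "j > 0"
      using not_less_Least[of "j - 1" "\<lambda>j. j = length ts \<or> x < ts ! j"] that
      unfolding j_def[symmetric] by (auto simp: calculation(1))
    ultimately have "x \<in> ?B ! j" using x by (auto simp: mem_bins_of_thresholds_iff)
    then show "x \<in> (\<Union>b<length ?B. ?B ! b)" using \<open>j \<le> length ts\<close> by auto
  qed
  moreover have "?B \<noteq> []" by (metis length_bins_of_thresholds list.size(3) nat.distinct(1))
  ultimately show ?thesis using ordered unfolding valid_binning_def by blast
qed

lemma bin_index_bins_of_thresholds_eq_iff:
  assumes sorted: "sorted_wrt (<) ts" and ts01: "set ts \<subseteq> {0<..<1}"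
    and "x \<in> {0..1}" "x' \<in> {0..1}" "x \<le> x'"
  shows "bin_index (bins_of_thresholds ts) x = bin_index (bins_of_thresholds ts) x'
    \<longleftrightarrow> (\<forall>t\<in>set ts. x < t \<longrightarrow> x' < t)"
proof -
  let ?B = "bins_of_thresholds ts"
  have vb: "valid_binning ?B" using valid_binning_bins_of_thresholds[OF sorted ts01] .
  define j where "j = bin_index ?B x"
  have j: "j \<le> length ts" "x \<in> ?B ! j"
    using bin_index[OF vb \<open>x \<in> {0..1}\<close>] unfolding j_def by auto
  show ?thesis
  proof
    assume "bin_index ?B x = bin_index ?B x'"
    then have x': "x' \<in> ?B ! j" using bin_index(2)[OF vb \<open>x' \<in> {0..1}\<close>] unfolding j_def by simp
    show "\<forall>t\<in>set ts. x < t \<longrightarrow> x' < t"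
    proof (intro ballI impI)
      fix t assume "t \<in> set ts" "x < t"
      then obtain i where i: "i < length ts" "t = ts ! i" by (auto simp: in_set_conv_nth)
      have "j \<le> i"
      proof (rule ccontr)
        assume "\<not> j \<le> i"
        then have "ts ! i \<le> ts ! (j - 1)"
          using j(1) sorted_nth_mono[OF strict_sorted_imp_sorted[OF sorted]] by simp
        also have "\<dots> \<le> x" using j \<open>\<not> j \<le> i\<close> by (auto simp: mem_bins_of_thresholds_iff)
        finally show False using \<open>x < t\<close> i by simp
      qed
      then have "x' < ts ! j" using x' i j(1) by (auto simp: mem_bins_of_thresholds_iff)
      also have "ts ! j \<le> t"
        using \<open>j \<le> i\<close> i sorted_nth_mono[OF strict_sorted_imp_sorted[OF sorted]] by simp
      finally show "x' < t" .
    qed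
  next
    assume no_threshold: "\<forall>t\<in>set ts. x < t \<longrightarrow> x' < t"
    have "x' \<in> ?B ! j"
    proof (cases "j = length ts")
      case False
      then have "x < ts ! j" using j by (simp add: mem_bins_of_thresholds_iff)
      then have "x' < ts ! j" using no_threshold False j(1) by simp
      then show ?thesis using j False \<open>x \<le> x'\<close> by (auto simp: mem_bins_of_thresholds_iff)
    next
      case True
      then show ?thesis using j \<open>x \<le> x'\<close> \<open>x' \<in> {0..1}\<close> by (simp add: mem_bins_of_thresholds_iff)
    qed
    then show "bin_index ?B x = bin_index ?B x'"
      using bin_index_eqI[OF vb, of j x'] j(1) unfolding j_def by simp
  qed
qed

section \<open>The PAVA bins\<close>

lemma nondecr_on_eq_iff_no_jump:
  assumes mono: "nondecr_on N f" and "k \<le> k'" "k' < N"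
  shows "f k = f k' \<longleftrightarrow> (\<forall>c. k < c \<and> c \<le> k' \<longrightarrow> f (c - 1) = f c)"
proof
  assume "f k = f k'"
  moreover have le: "f i \<le> f j" if "i \<le> j" "j < N" for i j
    using mono that unfolding nondecr_on_def by blast
  then have "f k \<le> f (c - 1)" "f (c - 1) \<le> f c" "f c \<le> f k'" if "k < c" "c \<le> k'" for c
    using that \<open>k' < N\<close> by simp_all
  ultimately show "\<forall>c. k < c \<and> c \<le> k' \<longrightarrow> f (c - 1) = f c" by fastforce
next
  assume jumps: "\<forall>c. k < c \<and> c \<le> k' \<longrightarrow> f (c - 1) = f c"
  have "f (k + d) = f k" if "k + d \<le> k'" for d
    using that
  proof (induction d)
    case (Suc d)
    then show ?case using jumps[rule_format, of "Suc (k + d)"] by simp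
  qed simp
  from this[of "k' - k"] show "f k = f k'" using \<open>k \<le> k'\<close> by simp
qed

lemma midpoint_less_iff:
  fixes q :: "nat \<Rightarrow> real"
  assumes "strict_mono_on {..<N} q" and "0 < c" "c < N" "k < N"
  shows "q k < (q (c - 1) + q c) / 2 \<longleftrightarrow> k < c"
proof
  assume "k < c"
  then have "q k \<le> q (c - 1)" "q (c - 1) < q c"
    using assms by (auto intro: strict_mono_on_leD strict_mono_onD)
  then show "q k < (q (c - 1) + q c) / 2" by simp
next
  assume less: "q k < (q (c - 1) + q c) / 2"
  show "k < c"
  proof (rule ccontr)
    assume "\<not> k < c"
    then have "q c \<le> q k" using assms by (auto intro: strict_mono_on_leD)
    moreover have "q (c - 1) < q c" using assms by (auto intro: strict_mono_onD)
    ultimately show False using less by simp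
  qed
qed

lemma set_pava_thresholds:
  "set (pava_thresholds N q yhat)
    = (\<lambda>c. (q (c - 1) + q c) / 2) ` {c. 0 < c \<and> c < N \<and> yhat (c - 1) \<noteq> yhat c}"
  by (simp add: pava_thresholds_def)

lemma pava_thresholds_in_unit_interval:
  fixes q :: "nat \<Rightarrow> real"
  assumes "strict_mono_on {..<N} q" and "\<forall>k<N. q k \<in> {0..1}"
  shows "set (pava_thresholds N q yhat) \<subseteq> {0<..<1}"
proof
  fix t assume "t \<in> set (pava_thresholds N q yhat)"
  then obtain c where c: "0 < c" "c < N" and t: "t = (q (c - 1) + q c) / 2"
    by (auto simp: set_pava_thresholds)
  then have "q (c - 1) < q c" using assms(1) by (auto intro: strict_mono_onD)
  moreover have "q (c - 1) \<in> {0..1}" "q c \<in> {0..1}" using assms(2) c by auto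
  ultimately show "t \<in> {0<..<1}" unfolding t by auto
qed

lemma bin_index_pava_bins_eq_iff:
  fixes q :: "nat \<Rightarrow> real"
  assumes q_sorted: "strict_mono_on {..<N} q" and q_range: "\<forall>k<N. q k \<in> {0..1}"
    and mono: "nondecr_on N yhat" and "k < N" "k' < N"
  shows "bin_index (pava_bins N q yhat) (q k) = bin_index (pava_bins N q yhat) (q k')
    \<longleftrightarrow> yhat k = yhat k'"
proof -
  have ordered: "bin_index (pava_bins N q yhat) (q i) = bin_index (pava_bins N q yhat) (q j)
      \<longleftrightarrow> yhat i = yhat j" if "i \<le> j" "j < N" for i j
  proof -
    have "sorted_wrt (<) (pava_thresholds N q yhat)"
      unfolding pava_thresholds_def by (rule strict_sorted_list_of_set)
    moreover have "q i \<le> q j" using q_sorted \<open>i \<le> j\<close> \<open>j < N\<close> by (auto intro: strict_mono_on_leD)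
    ultimately have "bin_index (pava_bins N q yhat) (q i) = bin_index (pava_bins N q yhat) (q j)
        \<longleftrightarrow> (\<forall>t\<in>set (pava_thresholds N q yhat). q i < t \<longrightarrow> q j < t)"
      unfolding pava_bins_def using q_range \<open>i \<le> j\<close> \<open>j < N\<close>
      by (intro bin_index_bins_of_thresholds_eq_iff pava_thresholds_in_unit_interval[OF q_sorted q_range]) auto
    also have "\<dots> \<longleftrightarrow> (\<forall>c. 0 < c \<and> c < N \<and> yhat (c - 1) \<noteq> yhat c \<longrightarrow> i < c \<longrightarrow> j < c)"
      using midpoint_less_iff[OF q_sorted] \<open>i \<le> j\<close> \<open>j < N\<close> by (auto simp: set_pava_thresholds)
    also have "\<dots> \<longleftrightarrow> (\<forall>c. i < c \<and> c \<le> j \<longrightarrow> yhat (c - 1) = yhat c)"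
      using \<open>j < N\<close> by (meson le_less_trans not_le zero_le less_le_trans)
    also have "\<dots> \<longleftrightarrow> yhat i = yhat j"
      using nondecr_on_eq_iff_no_jump[OF mono \<open>i \<le> j\<close> \<open>j < N\<close>] by simp
    finally show ?thesis .
  qed
  show ?thesis using ordered[of k k'] ordered[of k' k] assms(4,5) by (cases "k \<le> k'") auto
qed

lemma valid_binning_pava_bins:
  fixes q :: "nat \<Rightarrow> real"
  assumes "strict_mono_on {..<N} q" and "\<forall>k<N. q k \<in> {0..1}"
  shows "valid_binning (pava_bins N q yhat)"
  unfolding pava_bins_def
  by (intro valid_binning_bins_of_thresholds pava_thresholds_in_unit_interval[OF assms])
    (simp add: pava_thresholds_def)

theorem mainTheorem1:
  fixes N :: nat and p y yhat :: "nat \<Rightarrow> real" and \<sigma> :: "nat \<Rightarrow> nat"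
  assumes p_range: "\<forall>i<N. p i \<in> {0..1}"
    and y_bin: "\<forall>i<N. y i \<in> {0, 1}"
    and sort_perm: "bij_betw \<sigma> {..<N} {..<N}"
    and sorted: "strict_mono_on {..<N} (\<lambda>k. p (\<sigma> k))"
    and fit: "isotonic_fit N (\<lambda>k. y (\<sigma> k)) yhat"
  shows "feasible_binning N p y (pava_bins N (\<lambda>k. p (\<sigma> k)) yhat)
    \<and> (\<forall>Bs. feasible_binning N p y Bs \<longrightarrow>
          binning_objective N p y (pava_bins N (\<lambda>k. p (\<sigma> k)) yhat) \<le> binning_objective N p y Bs)"
proof -
  define PB where "PB = pava_bins N (\<lambda>k. p (\<sigma> k)) yhat"
  have q_range: "\<forall>k<N. p (\<sigma> k) \<in> {0..1}"
    using p_range sort_perm by (auto dest: bij_betw_apply)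
  have q_mono: "nondecr_on N (\<lambda>k. p (\<sigma> k))"
    using sorted unfolding nondecr_on_def by (auto intro: strict_mono_on_leD)
  have yhat_mono: "nondecr_on N yhat" using fit unfolding isotonic_fit_def by blast
  have vb: "valid_binning PB" unfolding PB_def using valid_binning_pava_bins[OF sorted q_range] .
  have "bin_index PB (p (\<sigma> k)) = bin_index PB (p (\<sigma> k')) \<longleftrightarrow> yhat k = yhat k'"
    if "k < N" "k' < N" for k k'
    using bin_index_pava_bins_eq_iff[OF sorted q_range yhat_mono that] unfolding PB_def by simp
  then have prob: "bin_prob N p y (PB ! bin_index PB (p (\<sigma> k))) = yhat k" if "k < N" for k
    using bin_prob_eq_isotonic_fit[OF vb p_range sort_perm fit] that by blast
  then have "monotone_bins N p y PB"
    using monotone_bins_iff_nondecr_on[OF vb p_range sort_perm q_mono] yhat_mono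
    unfolding nondecr_on_def by simp
  moreover have "binning_objective N p y PB = (\<Sum>k<N. (yhat k - y (\<sigma> k))\<^sup>2) / real N"
    using binning_objective_eq_sorted_mean_sq[OF vb p_range sort_perm] prob by simp
  ultimately show ?thesis
    using vb isotonic_fit_le_binning_objective[OF _ p_range sort_perm q_mono fit]
    unfolding feasible_binning_def PB_def by simp
qed

end
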